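(* Let $G$ be a finite simple graph and $A\subseteq V(G)$. If for every $S\subseteq V(G)$ we have $o_{G[A]}(G-S)\leq |S|$, then there exists a matching in $G$ that saturates every vertex of $A$.
   Context: For $S\subseteq V(G)$, $o_{G[A]}(G-S)$ denotes the number of connected components of $G-S$ that have an odd number of vertices and are contained in the induced subgraph $G[A]$ (i.e. whose vertex sets are subsets of $A$). *)

theory Defs
  imports Main
begin

definition simple_graph :: "'a set \<Rightarrow> 'a set set \<Rightarrow> bool" where
  "simple_graph V E \<longleftrightarrow> finite V \<and> (\<forall>e\<in>E. e \<subseteq> V \<and> card e = 2)"

definition induced_edges :: "'a set set \<Rightarrow> 'a set \<Rightarrow> 'a set set" where
  "induced_edges E X = {e \<in> E. e \<subseteq> X}"

definition reach_in :: "'a set \<Rightarrow> 'a set set \<Rightarrow> 'a \<Rightarrow> 'a \<Rightarrow> bool" where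
  "reach_in X E = (\<lambda>u v. u \<in> X \<and> v \<in> X \<and>
      (u, v) \<in> ({(x, y). {x, y} \<in> induced_edges E X})\<^sup>*)"

definition components :: "'a set \<Rightarrow> 'a set set \<Rightarrow> 'a set set" where
  "components X E = {{v. reach_in X E u v} | u. u \<in> X}"

text \<open>o_{G[A]}(G - S): number of odd components of G - S whose vertex set lies in A.\<close>
definition odd_comps_in :: "'a set \<Rightarrow> 'a set set \<Rightarrow> 'a set \<Rightarrow> 'a set \<Rightarrow> nat" where
  "odd_comps_in V E A S = card {C \<in> components (V - S) E. odd (card C) \<and> C \<subseteq> A}"

definition matching :: "'a set set \<Rightarrow> 'a set set \<Rightarrow> bool" where
  "matching E M \<longleftrightarrow> M \<subseteq> E \<and> (\<forall>e1\<in>M. \<forall>e2\<in>M. e1 \<noteq> e2 \<longrightarrow> e1 \<inter> e2 = {})"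

definition saturates :: "'a set set \<Rightarrow> 'a set \<Rightarrow> bool" where
  "saturates M A \<longleftrightarrow> (\<forall>v\<in>A. \<exists>e\<in>M. v \<in> e)"

end

theory Submission
  imports Defs
begin

(* One half of the Tutte-Berge formula does the work: every finite simple graph has a set U and
   a matching M with |V| + |U| <= o(G - U) + 2|M|.  If some
   vertex v is covered by every maximum matching, delete v, apply induction and put v into U.
   Otherwise (Gallai's lemma) no two vertices missed by a maximum matching M lie in a common
   component: walking along a path, an exchange argument produces a maximum matching that
   misses the next vertex of the path but covers everything else that M covers.  So each of
   the |V| - 2|M| missed vertices lies in its own odd component.

   To saturate A, complete G to G' by adding a dummy vertex when |V| is odd and turning the
   vertices outside A, together with the dummy, into a clique.  For U' in G', the components of
   G' - U' inside A are components of G - U (U the preimage of U'), and all other components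
   meet the clique and therefore coincide, so o(G' - U') <= |U'| + 1 by hypothesis.  The
   Tutte-Berge bound and the parity of |V'| then force a perfect matching of G', and its edges
   coming from G saturate A. *)

lemma simple_graph_finite_edges:
  assumes "simple_graph V E"
  shows "finite E"
proof -
  have "E \<subseteq> Pow V" using assms unfolding simple_graph_def by blast
  then show ?thesis using assms finite_subset unfolding simple_graph_def by blast
qed

lemma simple_graph_edgeE:
  assumes "simple_graph V E" "e \<in> E" "x \<in> e"
  obtains y where "e = {x, y}" "x \<noteq> y" "x \<in> V" "y \<in> V"
proof -
  have "card e = 2" "e \<subseteq> V" using assms unfolding simple_graph_def by auto
  then obtain a b where "e = {a, b}" "a \<noteq> b" "e \<subseteq> V" by (meson card_2_iff)
  then show ?thesis using that assms(3) by (auto simp: insert_commute)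
qed

lemma matching_finite:
  assumes "simple_graph V E" "matching E M"
  shows "finite M"
proof -
  have "M \<subseteq> E" using assms(2) unfolding matching_def by simp
  then show ?thesis using simple_graph_finite_edges[OF assms(1)] by (rule finite_subset)
qed

lemma matching_subset: "matching E M \<Longrightarrow> N \<subseteq> M \<Longrightarrow> matching E N"
  unfolding matching_def by blast

lemma matching_insert:
  "matching E M \<Longrightarrow> e \<in> E \<Longrightarrow> e \<inter> \<Union>M = {} \<Longrightarrow> matching E (insert e M)"
  unfolding matching_def by blast

lemma matching_Union_subset: "simple_graph V E \<Longrightarrow> matching E M \<Longrightarrow> \<Union>M \<subseteq> V"
  unfolding simple_graph_def matching_def by blast

lemma card_Union_matching:
  assumes "simple_graph V E" "matching E M"
  shows "card (\<Union>M) = 2 * card M"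
proof -
  have two: "card e = 2" if "e \<in> M" for e
    using assms that unfolding simple_graph_def matching_def by blast
  have "card (\<Union>M) = sum card M"
  proof (rule card_Union_disjoint)
    show "pairwise disjnt M"
      using assms(2) unfolding matching_def pairwise_def disjnt_def by blast
    show "finite e" if "e \<in> M" for e
      using two[OF that] card.infinite by fastforce
  qed
  then show ?thesis using two by simp
qed

lemma card_unmatched:
  assumes "simple_graph V E" "matching E M"
  shows "card V = card (V - \<Union>M) + 2 * card M"
proof -
  have "finite V" using assms(1) unfolding simple_graph_def by blast
  then show ?thesis
    using card_Union_matching[OF assms] matching_Union_subset[OF assms]
    by (metis card_Diff_subset card_mono finite_subset le_add_diff_inverse2)
qed

lemma Union_matching_eq_if_card_le:
  assumes "simple_graph V E" "matching E M" "card V \<le> 2 * card M"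
  shows "\<Union>M = V"
proof -
  have "finite V" using assms(1) unfolding simple_graph_def by blast
  then have "V - \<Union>M = {}"
    using card_unmatched[OF assms(1,2)] assms(3) by (simp add: finite_subset)
  then show ?thesis using matching_Union_subset[OF assms(1,2)] by blast
qed

definition max_matching :: "'a set set \<Rightarrow> 'a set set \<Rightarrow> bool" where
  "max_matching E M \<longleftrightarrow> matching E M \<and> (\<forall>M'. matching E M' \<longrightarrow> card M' \<le> card M)"

lemma ex_max_matching:
  assumes "finite E"
  shows "\<exists>M. max_matching E M"
  unfolding max_matching_def
proof (rule ex_has_greatest_nat[where k = "{}" and b = "Suc (card E)"])
  show "matching E {}" unfolding matching_def by simp
  show "\<forall>M. matching E M \<longrightarrow> card M < Suc (card E)"
    using card_mono[OF assms] unfolding matching_def by (simp add: le_imp_less_Suc)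
qed

lemma max_matching_card_eq: "max_matching E M \<Longrightarrow> max_matching E N \<Longrightarrow> card M = card N"
  unfolding max_matching_def by (simp add: le_antisym)

lemma max_matching_no_free_edge:
  assumes "simple_graph V E" "max_matching E M" "e \<in> E"
  shows "e \<inter> \<Union>M \<noteq> {}"
proof
  assume free: "e \<inter> \<Union>M = {}"
  have "e \<noteq> {}" using assms(1,3) unfolding simple_graph_def by fastforce
  then have "e \<notin> M" using free by blast
  moreover have "finite M"
    using assms(2) matching_finite[OF assms(1)] unfolding max_matching_def by blast
  moreover have "card (insert e M) \<le> card M"
    using assms(2,3) free matching_insert unfolding max_matching_def by blast
  ultimately show False by simp
qed

lemma reach_in_refl: "u \<in> X \<Longrightarrow> reach_in X E u u"
  unfolding reach_in_def by simp

lemma reach_in_sym: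
  assumes "reach_in X E u v"
  shows "reach_in X E v u"
proof -
  have "sym {(x, y). {x, y} \<in> induced_edges E X}"
    unfolding sym_def by (auto simp: insert_commute)
  then have "sym ({(x, y). {x, y} \<in> induced_edges E X}\<^sup>*)" by (rule sym_rtrancl)
  then show ?thesis using assms unfolding reach_in_def sym_def by blast
qed

lemma reach_in_trans: "reach_in X E u v \<Longrightarrow> reach_in X E v w \<Longrightarrow> reach_in X E u w"
  unfolding reach_in_def by auto

lemma reach_in_step:
  "reach_in X E u v \<Longrightarrow> {v, w} \<in> E \<Longrightarrow> {v, w} \<subseteq> X \<Longrightarrow> reach_in X E u w"
  unfolding reach_in_def induced_edges_def by (auto intro: rtrancl_into_rtrancl)

lemma reach_in_edge:
  assumes "{v, w} \<in> E" "{v, w} \<subseteq> X"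
  shows "reach_in X E v w"
proof -
  have "v \<in> X" using assms(2) by simp
  then show ?thesis using reach_in_step[OF reach_in_refl assms] by simp
qed

lemma reach_in_induct [consumes 1, case_names refl step]:
  assumes "reach_in X E u v"
    and "P u"
    and "\<And>v w. reach_in X E u v \<Longrightarrow> P v \<Longrightarrow> {v, w} \<in> E \<Longrightarrow> {v, w} \<subseteq> X \<Longrightarrow> P w"
  shows "P v"
proof -
  have "(u, v) \<in> {(x, y). {x, y} \<in> induced_edges E X}\<^sup>*" "u \<in> X"
    using assms(1) unfolding reach_in_def by auto
  then show ?thesis
  proof (induction rule: rtrancl_induct)
    case base
    show ?case using assms(2) .
  next
    case (step v w)
    have edge: "{v, w} \<in> E" "{v, w} \<subseteq> X"
      using step(2) unfolding induced_edges_def by auto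
    then have "reach_in X E u v" using step(1,4) unfolding reach_in_def by simp
    then show ?case using assms(3) step(3,4) edge by blast
  qed
qed

lemma reach_in_hom:
  assumes "reach_in X E u v"
    and "f ` X \<subseteq> Y"
    and "\<And>x y. {x, y} \<in> E \<Longrightarrow> {x, y} \<subseteq> X \<Longrightarrow> {f x, f y} \<in> E'"
  shows "reach_in Y E' (f u) (f v)"
  using assms(1)
proof (induction rule: reach_in_induct)
  case refl
  have "u \<in> X" using assms(1) unfolding reach_in_def by simp
  then have "f u \<in> Y" using assms(2) by blast
  then show ?case by (rule reach_in_refl)
next
  case (step v w)
  have "{f v, f w} \<subseteq> Y" using step.hyps(3) assms(2) by auto
  moreover have "{f v, f w} \<in> E'" using step.hyps(2,3) by (rule assms(3))
  ultimately show ?case using reach_in_step[OF step.IH] by simp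
qed

lemma reach_in_cong:
  "induced_edges E X = induced_edges E' X \<Longrightarrow> reach_in X E = reach_in X E'"
  unfolding reach_in_def by simp

lemma components_cong:
  assumes "induced_edges E X = induced_edges E' X"
  shows "components X E = components X E'"
  unfolding components_def reach_in_cong[OF assms] ..

lemma components_subset: "C \<in> components X E \<Longrightarrow> C \<subseteq> X"
  unfolding components_def reach_in_def by blast

lemma finite_components: "finite X \<Longrightarrow> finite (components X E)"
  by (meson PowI components_subset finite_Pow_iff finite_subset subsetI)

lemma component_of_member:
  assumes "C \<in> components X E" "q \<in> C"
  shows "C = {w. reach_in X E q w}"
proof -
  obtain p where C: "C = {w. reach_in X E p w}"
    using assms(1) unfolding components_def by blast
  then have "reach_in X E p q" using assms(2) by simp
  then have "reach_in X E p w \<longleftrightarrow> reach_in X E q w" for w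
    using reach_in_sym reach_in_trans by metis
  then show ?thesis using C by simp
qed

lemma component_edge_closed:
  assumes "C \<in> components X E" "{x, y} \<in> E" "{x, y} \<subseteq> X" "x \<in> C"
  shows "y \<in> C"
proof -
  have "C = {w. reach_in X E x w}" using component_of_member[OF assms(1,4)] .
  then show ?thesis using reach_in_edge[OF assms(2,3)] by simp
qed

lemma component_connected:
  assumes "C \<in> components X E" "p \<in> C" "q \<in> C"
  shows "reach_in C E p q"
proof -
  have C: "C = {w. reach_in X E p w}" using component_of_member[OF assms(1,2)] .
  have "reach_in X E p q" using assms(3) C by simp
  then show ?thesis
  proof (induction rule: reach_in_induct)
    case refl
    then show ?case using assms(2) reach_in_refl by fast
  next
    case (step v w)
    have "reach_in X E p w" using reach_in_step[OF step.hyps] .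
    then have "{v, w} \<subseteq> C" using C step.hyps(1) by simp
    then show ?case using reach_in_step[OF step.IH step.hyps(2)] by simp
  qed
qed

section \<open>Gallai's lemma and the Tutte-Berge bound\<close>

lemma max_matching_exchange:
  assumes G: "simple_graph V E" and M: "max_matching E M" and N: "max_matching E N"
    and t: "t \<notin> \<Union>N" and x: "x \<in> \<Union>M" "x \<notin> \<Union>N" "x \<noteq> t"
  obtains N' where "max_matching E N'" "t \<notin> \<Union>N'" "card (M \<inter> N) < card (M \<inter> N')"
proof -
  have mM: "matching E M" and mN: "matching E N" using M N unfolding max_matching_def by auto
  obtain e where eM: "e \<in> M" and xe: "x \<in> e" using x by blast
  have eE: "e \<in> E" using eM mM unfolding matching_def by blast
  obtain y where exy: "e = {x, y}" using simple_graph_edgeE[OF G eE xe] by blast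
  have "y \<in> \<Union>N" using max_matching_no_free_edge[OF G N eE] x exy by blast
  then obtain f where fN: "f \<in> N" and yf: "y \<in> f" by blast
  have eN: "e \<notin> N" using x xe by blast
  have fM: "f \<notin> M"
  proof
    assume "f \<in> M"
    moreover have "y \<in> e \<inter> f" using exy yf by blast
    ultimately have "f = e" using eM mM unfolding matching_def by blast
    then show False using fN eN by blast
  qed
  define N' where "N' = insert e (N - {f})"
  have "y \<notin> g" if "g \<in> N - {f}" for g
    using that fN yf mN unfolding matching_def by blast
  then have "e \<inter> \<Union>(N - {f}) = {}" using x exy by blast
  moreover have "matching E (N - {f})" using matching_subset[OF mN] by blast
  ultimately have "matching E N'" unfolding N'_def using eE matching_insert by blast
  moreover have "card N' = card N"
    unfolding N'_def using eN fN matching_finite[OF G mN] by (metis DiffE card_Suc_Diff1 card_insert_disjoint finite_Diff)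
  ultimately have "max_matching E N'" using N unfolding max_matching_def by simp
  moreover have "t \<notin> e" using t x(3) \<open>y \<in> \<Union>N\<close> exy by auto
  then have "t \<notin> \<Union>N'" using t unfolding N'_def by blast
  moreover have "card (M \<inter> N) < card (M \<inter> N')"
  proof -
    have "M \<inter> N' = insert e (M \<inter> N)" unfolding N'_def using fM eM by blast
    then show ?thesis using eN matching_finite[OF G mM] by simp
  qed
  ultimately show ?thesis by (rule that)
qed

lemma max_matching_avoiding_covering:
  assumes G: "simple_graph V E" and M: "max_matching E M"
    and avoid: "max_matching E N0" "t \<notin> \<Union>N0"
  obtains N where "max_matching E N" "t \<notin> \<Union>N" "\<Union>M - {t} \<subseteq> \<Union>N"
proof -
  let ?P = "\<lambda>N. max_matching E N \<and> t \<notin> \<Union>N"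
  have "\<exists>N. ?P N \<and> (\<forall>N'. ?P N' \<longrightarrow> card (M \<inter> N') \<le> card (M \<inter> N))"
  proof (rule ex_has_greatest_nat[where b = "Suc (card M)"])
    show "?P N0" using avoid by blast
    have "finite M" using M matching_finite[OF G] unfolding max_matching_def by blast
    then show "\<forall>N. ?P N \<longrightarrow> card (M \<inter> N) < Suc (card M)"
      by (simp add: card_mono le_imp_less_Suc)
  qed
  then obtain N where N: "max_matching E N" "t \<notin> \<Union>N"
    and greatest: "\<And>N'. ?P N' \<Longrightarrow> card (M \<inter> N') \<le> card (M \<inter> N)"
    by auto
  have "\<Union>M - {t} \<subseteq> \<Union>N"
  proof
    fix x assume "x \<in> \<Union>M - {t}"
    show "x \<in> \<Union>N"
    proof (rule ccontr)
      assume "x \<notin> \<Union>N"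
      moreover have "x \<in> \<Union>M" "x \<noteq> t" using \<open>x \<in> \<Union>M - {t}\<close> by auto
      ultimately obtain N' where "max_matching E N'" "t \<notin> \<Union>N'" "card (M \<inter> N) < card (M \<inter> N')"
        using max_matching_exchange[OF G M N] by blast
      then show False using greatest[of N'] by simp
    qed
  qed
  with N show ?thesis by (rule that)
qed

lemma max_matching_extra_vertex_unique:
  assumes G: "simple_graph V E" and M: "max_matching E M" and N: "max_matching E N"
    and cover: "\<Union>M - {t} \<subseteq> \<Union>N"
    and ab: "a \<in> \<Union>N - \<Union>M" "b \<in> \<Union>N - \<Union>M"
  shows "a = b"
proof -
  have mM: "matching E M" and mN: "matching E N" using M N unfolding max_matching_def by auto
  have "finite V" using G unfolding simple_graph_def by blast
  then have fin: "finite (\<Union>M)" "finite (\<Union>N)"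
    using finite_subset[OF matching_Union_subset[OF G mM]]
      finite_subset[OF matching_Union_subset[OF G mN]] by auto
  have "card (\<Union>N) = card (\<Union>M)"
    using card_Union_matching[OF G] mM mN max_matching_card_eq[OF M N] by simp
  then have "card (\<Union>N - \<Union>M) = card (\<Union>M - \<Union>N)"
    using fin by (simp add: card_Diff_subset_Int Int_commute)
  also have "\<dots> \<le> card {t}" using cover by (intro card_mono) auto
  finally have "card (\<Union>N - \<Union>M) \<le> Suc 0" by simp
  then have "\<forall>x \<in> \<Union>N - \<Union>M. \<forall>y \<in> \<Union>N - \<Union>M. x = y"
    using card_le_Suc0_iff_eq[of "\<Union>N - \<Union>M"] fin(2) by simp
  then show ?thesis using ab by blast
qed

lemma unmatched_vertices_disconnected:
  assumes G: "simple_graph V E"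
    and avoidable: "\<forall>t \<in> V. \<exists>N. max_matching E N \<and> t \<notin> \<Union>N"
    and "reach_in V E u w" "max_matching E M" "u \<notin> \<Union>M" "w \<notin> \<Union>M"
  shows "u = w"
  using assms(3-)
proof (induction arbitrary: M rule: reach_in_induct)
  case refl
  show ?case by simp
next
  case (step v w)
  show "u = w"
  proof (rule ccontr)
    assume "u \<noteq> w"
    have "v \<in> V" using step.hyps(3) by simp
    then obtain N0 where N0: "max_matching E N0" "v \<notin> \<Union>N0" using avoidable by blast
    obtain N where N: "max_matching E N" "v \<notin> \<Union>N" and cover: "\<Union>M - {v} \<subseteq> \<Union>N"
      by (rule max_matching_avoiding_covering[OF G step.prems(1) N0])
    \<comment> \<open>N covers at most one vertex missed by M, but it has to cover both u and w.\<close>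
    have "{v, w} \<inter> \<Union>N \<noteq> {}" using max_matching_no_free_edge[OF G N(1) step.hyps(2)] .
    then have "w \<in> \<Union>N" using N(2) by blast
    have "u \<in> \<Union>N"
    proof (rule ccontr)
      assume "u \<notin> \<Union>N"
      then have "u = v" using step.IH N by blast
      then have "{u, w} \<inter> \<Union>M \<noteq> {}"
        using max_matching_no_free_edge[OF G step.prems(1) step.hyps(2)] by simp
      then show False using step.prems(2,3) by blast
    qed
    then show False
      using max_matching_extra_vertex_unique[OF G step.prems(1) N(1) cover]
        \<open>w \<in> \<Union>N\<close> step.prems(2,3) \<open>u \<noteq> w\<close> by blast
  qed
qed

lemma card_component_matching:
  assumes G: "simple_graph V E" and mM: "matching E M" and C: "C \<in> components V E"
  shows "card C = card (C - \<Union>M) + 2 * card {e \<in> M. e \<subseteq> C}"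
proof -
  have "finite V" using G unfolding simple_graph_def by blast
  then have finC: "finite C" using components_subset[OF C] by (rule finite_subset[rotated])
  have "C \<inter> \<Union>M = \<Union>{e \<in> M. e \<subseteq> C}"
  proof (intro equalityI subsetI)
    fix p assume "p \<in> C \<inter> \<Union>M"
    then obtain e where e: "e \<in> M" "p \<in> e" and pC: "p \<in> C" by blast
    have eE: "e \<in> E" using e(1) mM unfolding matching_def by blast
    obtain q where epq: "e = {p, q}" and "p \<in> V" "q \<in> V"
      using simple_graph_edgeE[OF G eE e(2)] by blast
    then have "q \<in> C" using component_edge_closed[OF C _ _ pC] eE by simp
    then have "e \<subseteq> C" using pC epq by simp
    then show "p \<in> \<Union>{e \<in> M. e \<subseteq> C}" using e by blast
  qed auto
  moreover have "card (\<Union>{e \<in> M. e \<subseteq> C}) = 2 * card {e \<in> M. e \<subseteq> C}"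
    using card_Union_matching[OF G matching_subset[OF mM]] by simp
  ultimately show ?thesis using card_Int_Diff[OF finC, of "\<Union>M"] by simp
qed

definition odd_components :: "'a set \<Rightarrow> 'a set set \<Rightarrow> 'a set set" where
  "odd_components X E = {C \<in> components X E. odd (card C)}"

lemma card_unmatched_le_odd_components:
  assumes G: "simple_graph V E"
    and avoidable: "\<forall>t \<in> V. \<exists>N. max_matching E N \<and> t \<notin> \<Union>N"
    and M: "max_matching E M"
  shows "card (V - \<Union>M) \<le> card (odd_components V E)"
proof -
  define comp where "comp u = {w. reach_in V E u w}" for u
  have mM: "matching E M" using M unfolding max_matching_def by simp
  have disconnected: "u = w" if "u \<in> V - \<Union>M" "w \<in> V - \<Union>M" "reach_in V E u w" for u w
  proof -
    have "u \<notin> \<Union>M" "w \<notin> \<Union>M" using that(1,2) by auto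
    then show ?thesis by (rule unmatched_vertices_disconnected[OF G avoidable that(3) M])
  qed
  have "inj_on comp (V - \<Union>M)"
  proof (rule inj_onI)
    fix u w assume u: "u \<in> V - \<Union>M" and w: "w \<in> V - \<Union>M" and "comp u = comp w"
    have "w \<in> V" using w by blast
    then have "w \<in> comp w" unfolding comp_def by (simp add: reach_in_refl)
    then have "w \<in> comp u" using \<open>comp u = comp w\<close> by simp
    then show "u = w" using disconnected[OF u w] unfolding comp_def by simp
  qed
  moreover have "comp ` (V - \<Union>M) \<subseteq> odd_components V E"
  proof
    fix C assume "C \<in> comp ` (V - \<Union>M)"
    then obtain u where u: "u \<in> V - \<Union>M" and Cu: "C = comp u" by blast
    have C: "C \<in> components V E" unfolding Cu comp_def components_def using u by blast
    have "C - \<Union>M = {u}"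
    proof
      show "C - \<Union>M \<subseteq> {u}"
      proof
        fix w assume "w \<in> C - \<Union>M"
        then have "reach_in V E u w" "w \<in> V - \<Union>M" unfolding Cu comp_def reach_in_def by auto
        then have "u = w" using disconnected[OF u] by blast
        then show "w \<in> {u}" by simp
      qed
      show "{u} \<subseteq> C - \<Union>M" using u unfolding Cu comp_def by (auto intro: reach_in_refl)
    qed
    then have "odd (card C)" using card_component_matching[OF G mM C] by simp
    then show "C \<in> odd_components V E" using C unfolding odd_components_def by blast
  qed
  moreover have "finite (odd_components V E)"
    using G unfolding simple_graph_def odd_components_def by (simp add: finite_components)
  ultimately show ?thesis by (rule card_inj_on_le)
qed

lemma simple_graph_delete_vertex:
  "simple_graph V E \<Longrightarrow> simple_graph (V - {v}) {e \<in> E. v \<notin> e}"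
  unfolding simple_graph_def by blast

lemma components_delete_vertex:
  "components (V - insert v U) {e \<in> E. v \<notin> e} = components (V - insert v U) E"
  by (rule components_cong) (auto simp: induced_edges_def)

lemma ex_tutte_berge_barrier:
  assumes "simple_graph V E"
  shows "\<exists>U M. U \<subseteq> V \<and> matching E M \<and>
    card V + card U \<le> card (odd_components (V - U) E) + 2 * card M"
  using assms
proof (induction "card V" arbitrary: V E rule: less_induct)
  case less
  note G = less.prems
  obtain M where M: "max_matching E M"
    using ex_max_matching[OF simple_graph_finite_edges[OF G]] by blast
  then have mM: "matching E M" unfolding max_matching_def by simp
  show ?case
  proof (cases "\<forall>t \<in> V. \<exists>N. max_matching E N \<and> t \<notin> \<Union>N")
    case True
    then have "card V + card {} \<le> card (odd_components (V - {}) E) + 2 * card M"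
      using card_unmatched[OF G mM] card_unmatched_le_odd_components[OF G True M] by simp
    then show ?thesis using mM by blast
  next
    case False
    then obtain v where v: "v \<in> V" and covered: "\<And>N. max_matching E N \<Longrightarrow> v \<in> \<Union>N" by blast
    have finV: "finite V" using G unfolding simple_graph_def by blast
    let ?E' = "{e \<in> E. v \<notin> e}"
    have "card (V - {v}) < card V" using v finV by (rule card_Diff1_less[rotated])
    from less.hyps[OF this simple_graph_delete_vertex[OF G]]
    obtain U' M' where U': "U' \<subseteq> V - {v}" and mM': "matching ?E' M'"
      and IH: "card (V - {v}) + card U' \<le> card (odd_components (V - {v} - U') ?E') + 2 * card M'"
      by blast
    have "matching E M'" "v \<notin> \<Union>M'" using mM' unfolding matching_def by blast+
    have "card M' < card M"
    proof (rule ccontr)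
      assume "\<not> card M' < card M"
      then have "max_matching E M'" using M \<open>matching E M'\<close> unfolding max_matching_def by auto
      then show False using covered \<open>v \<notin> \<Union>M'\<close> by blast
    qed
    moreover have "V - {v} - U' = V - insert v U'" by blast
    moreover have "card V = Suc (card (V - {v}))" using finV v by (rule card_Suc_Diff1[symmetric])
    moreover have "card (insert v U') = Suc (card U')"
    proof -
      have "v \<notin> U'" using U' by blast
      then show ?thesis using finite_subset[OF U'] finV by simp
    qed
    ultimately have "card V + card (insert v U') \<le>
        card (odd_components (V - insert v U') E) + 2 * card M"
      using IH unfolding odd_components_def by (simp add: components_delete_vertex)
    moreover have "insert v U' \<subseteq> V" using U' v by blast
    ultimately show ?thesis using mM by blast
  qed
qed

section \<open>Completing the graph outside A\<close>

definition completion_vertices :: "'a set \<Rightarrow> 'a option set" where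
  "completion_vertices V = Some ` V \<union> (if even (card V) then {} else {None})"

definition completion_edges :: "'a set \<Rightarrow> 'a set set \<Rightarrow> 'a set \<Rightarrow> 'a option set set" where
  "completion_edges V E A = {Some ` e | e. e \<in> E} \<union>
    {{p, q} | p q. p \<noteq> q \<and> p \<in> completion_vertices V - Some ` A \<and> q \<in> completion_vertices V - Some ` A}"

lemma finite_completion_vertices: "finite V \<Longrightarrow> finite (completion_vertices V)"
  unfolding completion_vertices_def by simp

lemma vimage_Some_completion_vertices: "Some -` completion_vertices V = V"
  unfolding completion_vertices_def by auto

lemma even_card_completion_vertices:
  assumes "finite V"
  shows "even (card (completion_vertices V))"
proof (cases "even (card V)")
  case True
  then show ?thesis unfolding completion_vertices_def by (simp add: card_image)
next
  case False
  have "None \<notin> Some ` V" by blast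
  then show ?thesis using False assms unfolding completion_vertices_def by (simp add: card_image)
qed

lemma simple_graph_completion:
  assumes "simple_graph V E"
  shows "simple_graph (completion_vertices V) (completion_edges V E A)"
proof -
  have "e \<subseteq> completion_vertices V \<and> card e = 2" if e: "e \<in> completion_edges V E A" for e
  proof -
    consider (image) e0 where "e0 \<in> E" "e = Some ` e0"
      | (clique) p q where "p \<noteq> q" "p \<in> completion_vertices V" "q \<in> completion_vertices V" "e = {p, q}"
      using e unfolding completion_edges_def by blast
    then show ?thesis
    proof cases
      case image
      then show ?thesis
        using assms unfolding simple_graph_def completion_vertices_def by (auto simp: card_image)
    next
      case clique
      then show ?thesis by auto
    qed
  qed
  moreover have "finite (completion_vertices V)"
    using assms finite_completion_vertices unfolding simple_graph_def by blast
  ultimately show ?thesis unfolding simple_graph_def by blast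
qed

lemma completion_edge_inside:
  assumes "e' \<in> completion_edges V E A" "x \<in> e'" "x \<in> Some ` A"
  obtains e where "e \<in> E" "e' = Some ` e"
proof -
  have "e' \<notin> {{p, q} | p q. p \<noteq> q \<and> p \<in> completion_vertices V - Some ` A
      \<and> q \<in> completion_vertices V - Some ` A}"
    using assms(2,3) by blast
  then have "e' \<in> {Some ` e | e. e \<in> E}" using assms(1) unfolding completion_edges_def by blast
  then show ?thesis using that by blast
qed

lemma matching_preimage:
  assumes "inj f" "matching E' M'"
  shows "matching E {e \<in> E. f ` e \<in> M'}"
  unfolding matching_def
proof (intro conjI ballI impI)
  fix e1 e2 assume e: "e1 \<in> {e \<in> E. f ` e \<in> M'}" "e2 \<in> {e \<in> E. f ` e \<in> M'}" and "e1 \<noteq> e2"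
  then have "f ` e1 \<noteq> f ` e2" using inj_image_eq_iff[OF assms(1)] by blast
  then have "f ` e1 \<inter> f ` e2 = {}" using e assms(2) unfolding matching_def by blast
  then show "e1 \<inter> e2 = {}" by blast
qed auto

lemma completion_saturating_matching:
  assumes "matching (completion_edges V E A) M'" "Some ` A \<subseteq> \<Union>M'"
  shows "saturates {e \<in> E. Some ` e \<in> M'} A"
  unfolding saturates_def
proof
  fix a assume "a \<in> A"
  then obtain e' where e': "e' \<in> M'" "Some a \<in> e'" using assms(2) by blast
  then have "e' \<in> completion_edges V E A" using assms(1) unfolding matching_def by blast
  then obtain e where "e \<in> E" "e' = Some ` e"
    using completion_edge_inside e'(2) \<open>a \<in> A\<close> by blast
  then show "\<exists>e \<in> {e \<in> E. Some ` e \<in> M'}. a \<in> e" using e' by blast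
qed

lemma completion_components_outside_unique:
  assumes C1: "C1 \<in> components (completion_vertices V - U') (completion_edges V E A)"
    and C2: "C2 \<in> components (completion_vertices V - U') (completion_edges V E A)"
    and "\<not> C1 \<subseteq> Some ` A" "\<not> C2 \<subseteq> Some ` A"
  shows "C1 = C2"
proof -
  obtain q1 q2 where q: "q1 \<in> C1" "q2 \<in> C2" "q1 \<notin> Some ` A" "q2 \<notin> Some ` A"
    using assms(3,4) by blast
  have X: "q1 \<in> completion_vertices V - U'" "q2 \<in> completion_vertices V - U'"
    using components_subset[OF C1] components_subset[OF C2] q(1,2) by blast+
  have C2_eq: "C2 = {w. reach_in (completion_vertices V - U') (completion_edges V E A) q2 w}"
    using component_of_member[OF C2 q(2)] .
  show ?thesis
  proof (cases "q1 = q2")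
    case True
    then show ?thesis using component_of_member[OF C1 q(1)] C2_eq by simp
  next
    case False
    then have "{q1, q2} \<in> completion_edges V E A"
      using X q(3,4) unfolding completion_edges_def by blast
    moreover have "{q1, q2} \<subseteq> completion_vertices V - U'" using X by simp
    ultimately have "q2 \<in> C1" using component_edge_closed[OF C1 _ _ q(1)] by simp
    then show ?thesis using component_of_member[OF C1] C2_eq by simp
  qed
qed

lemma completion_component_inside:
  assumes C: "C \<in> components (completion_vertices V - U') (completion_edges V E A)"
    and CA: "C \<subseteq> Some ` A"
  shows "Some -` C \<in> components (V - Some -` U') E"
proof -
  let ?X = "completion_vertices V - U'" and ?E' = "completion_edges V E A"
  let ?U = "Some -` U'"
  have X_Some: "Some b \<in> ?X \<longleftrightarrow> b \<in> V - ?U" for b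
    unfolding completion_vertices_def by auto
  obtain u where "u \<in> ?X" and C_u: "C = {w. reach_in ?X ?E' u w}"
    using C unfolding components_def by blast
  then have "u \<in> C" by (simp add: reach_in_refl)
  then obtain a where ua: "u = Some a" using CA by blast
  have aU: "a \<in> V - ?U" using \<open>u \<in> ?X\<close> ua X_Some by simp
  have "Some -` C = {b. reach_in (V - ?U) E a b}"
  proof (intro equalityI subsetI)
    fix b assume "b \<in> Some -` C"
    then have "reach_in C ?E' (Some a) (Some b)"
      using component_connected[OF C] \<open>u \<in> C\<close> ua by simp
    moreover have "the ` C \<subseteq> V - ?U"
    proof
      fix x assume "x \<in> the ` C"
      then obtain c where "c \<in> C" "x = the c" by blast
      moreover obtain d where "c = Some d" using \<open>c \<in> C\<close> CA by blast
      moreover have "c \<in> ?X" using components_subset[OF C] \<open>c \<in> C\<close> by blast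
      ultimately show "x \<in> V - ?U" using X_Some by simp
    qed
    moreover have "{the x, the y} \<in> E" if xy: "{x, y} \<in> ?E'" "{x, y} \<subseteq> C" for x y
    proof -
      have "x \<in> Some ` A" using xy(2) CA by blast
      then obtain e where e: "e \<in> E" "{x, y} = Some ` e"
        using completion_edge_inside[OF xy(1)] by blast
      have "the ` {x, y} = the ` Some ` e" using e(2) by (rule arg_cong)
      also have "\<dots> = e" by (simp add: image_image)
      finally show ?thesis using e(1) by simp
    qed
    ultimately have "reach_in (V - ?U) E (the (Some a)) (the (Some b))"
      by (rule reach_in_hom)
    then show "b \<in> {b. reach_in (V - ?U) E a b}" by simp
  next
    fix b assume "b \<in> {b. reach_in (V - ?U) E a b}"
    then have "reach_in (V - ?U) E a b" by simp
    moreover have "Some ` (V - ?U) \<subseteq> ?X" using X_Some by auto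
    moreover have "{Some x, Some y} \<in> ?E'" if "{x, y} \<in> E" for x y
    proof -
      have "Some ` {x, y} \<in> ?E'" using that unfolding completion_edges_def by blast
      then show ?thesis by simp
    qed
    ultimately have "reach_in ?X ?E' (Some a) (Some b)" by (rule reach_in_hom)
    then show "b \<in> Some -` C" using C_u ua by simp
  qed
  then show ?thesis unfolding components_def using aU by blast
qed

lemma card_odd_components_completion:
  assumes G: "simple_graph V E"
  shows "card (odd_components (completion_vertices V - U') (completion_edges V E A))
    \<le> odd_comps_in V E A (Some -` U') + 1"
proof -
  let ?O = "odd_components (completion_vertices V - U') (completion_edges V E A)"
  let ?OA = "{C \<in> ?O. C \<subseteq> Some ` A}" and ?ON = "{C \<in> ?O. \<not> C \<subseteq> Some ` A}"
  have finV: "finite V" using G unfolding simple_graph_def by blast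
  then have "finite ?O"
    unfolding odd_components_def by (simp add: finite_completion_vertices finite_components)
  then have "card ?O = card ?OA + card ?ON"
    by (subst card_Un_disjoint[symmetric]) (auto intro: arg_cong[where f = card])
  moreover have "card ?ON \<le> 1"
  proof -
    have "C1 = C2" if "C1 \<in> ?ON" "C2 \<in> ?ON" for C1 C2
      using that completion_components_outside_unique unfolding odd_components_def by blast
    then show ?thesis using \<open>finite ?O\<close> card_le_Suc0_iff_eq[of ?ON] by simp
  qed
  moreover have "card ?OA \<le> odd_comps_in V E A (Some -` U')"
    unfolding odd_comps_in_def
  proof (rule card_inj_on_le)
    have Some_vimage: "Some ` (Some -` C) = C" if "C \<in> ?OA" for C
      using that by (auto simp: image_vimage_eq)
    show "inj_on (vimage Some) ?OA" using Some_vimage by (rule inj_on_inverseI)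
    show "vimage Some ` ?OA \<subseteq> {D \<in> components (V - Some -` U') E. odd (card D) \<and> D \<subseteq> A}"
    proof
      fix D assume "D \<in> vimage Some ` ?OA"
      then obtain C where C: "C \<in> ?OA" and D: "D = Some -` C" by blast
      have "C \<subseteq> range Some" using C by blast
      then have "card D = card C" unfolding D by (rule card_vimage_inj[OF inj_Some])
      then show "D \<in> {D \<in> components (V - Some -` U') E. odd (card D) \<and> D \<subseteq> A}"
        using C D completion_component_inside unfolding odd_components_def by auto
    qed
    show "finite {D \<in> components (V - Some -` U') E. odd (card D) \<and> D \<subseteq> A}"
      using finV by (simp add: finite_components)
  qed
  ultimately show ?thesis by linarith
qed

lemma card_odd_components_completion_le:
  assumes G: "simple_graph V E"
    and tutte: "\<forall>S \<subseteq> V. odd_comps_in V E A S \<le> card S"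
    and U': "U' \<subseteq> completion_vertices V"
  shows "card (odd_components (completion_vertices V - U') (completion_edges V E A)) \<le> card U' + 1"
proof -
  have "Some -` U' \<subseteq> V"
    using U' vimage_mono[OF U', of Some] by (simp add: vimage_Some_completion_vertices)
  then have "odd_comps_in V E A (Some -` U') \<le> card (Some -` U')" using tutte by simp
  also have "\<dots> \<le> card U'"
    using card_vimage_inj_on_le[of Some UNIV U'] finite_subset[OF U'] G
    by (simp add: finite_completion_vertices simple_graph_def)
  finally show ?thesis using card_odd_components_completion[OF G] by (meson add_right_mono le_trans)
qed

theorem lemma2p2:
  fixes V :: "'a set" and E :: "'a set set" and A :: "'a set"
  assumes "simple_graph V E"
    and "A \<subseteq> V"
    and "\<forall>S \<subseteq> V. odd_comps_in V E A S \<le> card S"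
  shows "\<exists>M. matching E M \<and> saturates M A"
proof -
  let ?V' = "completion_vertices V" and ?E' = "completion_edges V E A"
  have G': "simple_graph ?V' ?E'" using simple_graph_completion[OF assms(1)] .
  obtain U' M' where "U' \<subseteq> ?V'" and M': "matching ?E' M'"
    and barrier: "card ?V' + card U' \<le> card (odd_components (?V' - U') ?E') + 2 * card M'"
    using ex_tutte_berge_barrier[OF G'] by blast
  moreover have "card (odd_components (?V' - U') ?E') \<le> card U' + 1"
    using card_odd_components_completion_le[OF assms(1,3) \<open>U' \<subseteq> ?V'\<close>] .
  moreover have "even (card ?V')"
    using assms(1) even_card_completion_vertices unfolding simple_graph_def by blast
  ultimately have "card ?V' \<le> 2 * card M'" by presburger
  then have "\<Union>M' = ?V'" using Union_matching_eq_if_card_le[OF G' M'] by blast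
  then have "Some ` A \<subseteq> \<Union>M'" using assms(2) unfolding completion_vertices_def by blast
  then show ?thesis
    using matching_preimage[OF inj_Some M'] completion_saturating_matching[OF M'] by blast
qed

end
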